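(* Let $\mathcal{H}$ be a complex Hilbert space, $A\in\mathcal{B}(\mathcal{H})$ positive and $S\in\mathcal{B}_A(\mathcal{H})$. Then $$d\omega_A^2(S)\le\|S\|_A^4+2\|S\|_A^2-\sqrt{c_A\left(S^{\sharp_A}S\right)c_A\left(SS^{\sharp_A}\right)}.$$
   Context: $\mathcal{B}(\mathcal{H})$ denotes the bounded linear operators on $\mathcal{H}$. For positive $A$, $\langle x,z\rangle_A=\langle Ax,z\rangle$ and $\|z\|_A=\|A^{1/2}z\|$. $\mathcal{B}_A(\mathcal{H})$ is the set of $S\in\mathcal{B}(\mathcal{H})$ for which some $R\in\mathcal{B}(\mathcal{H})$ satisfies $AR=S^*A$; for such $S$, $S^{\sharp_A}=A^{\dagger}S^*A$ with $A^\dagger$ the Moore–Penrose inverse of $A$. For operators $T$ bounded with respect to $\|\cdot\|_A$: $\|T\|_A=\sup_{\|z\|_A=1}\|Tz\|_A$, $c_A(T)=\inf_{\|z\|_A=1}|\langle Tz,z\rangle_A|$ ($A$-Crawford number), and $d\omega_A(T)=\sup_{\|z\|_A=1}(|\langle Tz,z\rangle_A|^2+\|Tz\|_A^4)^{1/2}$. *)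

theory Defs
  imports "HOL-Analysis.Analysis"
begin

text \<open>HOL-Analysis has no complex inner product spaces, so we introduce a type class
of complex Hilbert spaces: a complete normed space with a complex scalar multiplication
(compatible with the real one) and a complex inner product, linear in the first argument,
conjugate symmetric, and inducing the norm.\<close>

class chilbert = real_normed_vector + complete_space +
  fixes scaleC :: "complex \<Rightarrow> 'a \<Rightarrow> 'a"
    and cinner :: "'a \<Rightarrow> 'a \<Rightarrow> complex"
  assumes scaleC_add_right: "scaleC c (x + y) = scaleC c x + scaleC c y"
    and scaleC_add_left: "scaleC (c + d) x = scaleC c x + scaleC d x"
    and scaleC_scaleC: "scaleC c (scaleC d x) = scaleC (c * d) x"
    and scaleC_one: "scaleC 1 x = x"
    and scaleR_scaleC: "scaleR r x = scaleC (complex_of_real r) x"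
    and norm_scaleC: "norm (scaleC c x) = cmod c * norm x"
    and cinner_add_left: "cinner (x + y) z = cinner x z + cinner y z"
    and cinner_scaleC_left: "cinner (scaleC c x) z = c * cinner x z"
    and cinner_commute: "cinner x y = cnj (cinner y x)"
    and cinner_self_norm: "cinner x x = complex_of_real ((norm x)\<^sup>2)"

definition clinear :: "('a::chilbert \<Rightarrow> 'a) \<Rightarrow> bool" where
  "clinear T \<longleftrightarrow> (\<forall>x y. T (x + y) = T x + T y) \<and> (\<forall>c x. T (scaleC c x) = scaleC c (T x))"

definition bounded_op :: "('a::chilbert \<Rightarrow> 'a) \<Rightarrow> bool" where
  "bounded_op T \<longleftrightarrow> clinear T \<and> (\<exists>K. \<forall>x. norm (T x) \<le> K * norm x)"

definition adjoint :: "('a::chilbert \<Rightarrow> 'a) \<Rightarrow> ('a \<Rightarrow> 'a)" where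
  "adjoint T = (THE T'. \<forall>x y. cinner (T x) y = cinner x (T' y))"

definition positive_op :: "('a::chilbert \<Rightarrow> 'a) \<Rightarrow> bool" where
  "positive_op A \<longleftrightarrow> bounded_op A \<and> (\<forall>x. Im (cinner (A x) x) = 0 \<and> Re (cinner (A x) x) \<ge> 0)"

text \<open>Moore--Penrose inverse of A, on its natural domain \<open>R(A) \<oplus> R(A)\<^sup>\<bottom>\<close>:
  \<open>A\<^sup>\<dagger> y\<close> is the unique \<open>x \<in> N(A)\<^sup>\<bottom>\<close> with \<open>y - A x \<in> R(A)\<^sup>\<bottom>\<close>.\<close>
definition mp_inverse :: "('a::chilbert \<Rightarrow> 'a) \<Rightarrow> 'a \<Rightarrow> 'a" where
  "mp_inverse A y = (THE x. (\<forall>z. A z = 0 \<longrightarrow> cinner x z = 0) \<and>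
                            (\<forall>w. cinner (y - A x) (A w) = 0))"

definition BA :: "('a::chilbert \<Rightarrow> 'a) \<Rightarrow> ('a \<Rightarrow> 'a) set" where
  "BA A = {S. bounded_op S \<and> (\<exists>R. bounded_op R \<and> A \<circ> R = adjoint S \<circ> A)}"

definition A_adj :: "('a::chilbert \<Rightarrow> 'a) \<Rightarrow> ('a \<Rightarrow> 'a) \<Rightarrow> ('a \<Rightarrow> 'a)" where
  "A_adj A S = mp_inverse A \<circ> adjoint S \<circ> A"

definition A_inner :: "('a::chilbert \<Rightarrow> 'a) \<Rightarrow> 'a \<Rightarrow> 'a \<Rightarrow> complex" where
  "A_inner A x z = cinner (A x) z"

definition A_norm :: "('a::chilbert \<Rightarrow> 'a) \<Rightarrow> 'a \<Rightarrow> real" where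
  "A_norm A z = sqrt (Re (A_inner A z z))"

definition A_sphere :: "('a::chilbert \<Rightarrow> 'a) \<Rightarrow> 'a set" where
  "A_sphere A = {z. A_norm A z = 1}"

text \<open>Supremum / infimum over the A-unit sphere; convention 0 when the sphere is empty
  (which happens only for A = 0).\<close>
definition A_sup :: "('a::chilbert \<Rightarrow> 'a) \<Rightarrow> ('a \<Rightarrow> real) \<Rightarrow> real" where
  "A_sup A f = (if A_sphere A = {} then 0 else (SUP z\<in>A_sphere A. f z))"

definition A_inf :: "('a::chilbert \<Rightarrow> 'a) \<Rightarrow> ('a \<Rightarrow> real) \<Rightarrow> real" where
  "A_inf A f = (if A_sphere A = {} then 0 else (INF z\<in>A_sphere A. f z))"

definition A_opnorm :: "('a::chilbert \<Rightarrow> 'a) \<Rightarrow> ('a \<Rightarrow> 'a) \<Rightarrow> real" where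
  "A_opnorm A T = A_sup A (\<lambda>z. A_norm A (T z))"

definition A_crawford :: "('a::chilbert \<Rightarrow> 'a) \<Rightarrow> ('a \<Rightarrow> 'a) \<Rightarrow> real" where
  "A_crawford A T = A_inf A (\<lambda>z. cmod (A_inner A (T z) z))"

definition A_dw_radius :: "('a::chilbert \<Rightarrow> 'a) \<Rightarrow> ('a \<Rightarrow> 'a) \<Rightarrow> real" where
  "A_dw_radius A T = A_sup A (\<lambda>z. sqrt ((cmod (A_inner A (T z) z))\<^sup>2 + (A_norm A (T z)) ^ 4))"

end

theory Submission
  imports Defs
begin

text \<open>On the \<open>A\<close>-unit sphere \<open>|\<langle>Sz,z\<rangle>\<^sub>A| \<le> \<parallel>Sz\<parallel>\<^sub>A \<le> \<parallel>S\<parallel>\<^sub>A\<close>, so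
  \<open>d\<omega>\<^sub>A(S)\<^sup>2 \<le> \<parallel>S\<parallel>\<^sub>A\<^sup>2 + \<parallel>S\<parallel>\<^sub>A\<^sup>4\<close>. Since \<open>S\<^sup>\<sharp>\<^sup>A\<close> is an \<open>A\<close>-adjoint of \<open>S\<close>, we have
  \<open>\<langle>S\<^sup>\<sharp>\<^sup>AS z,z\<rangle>\<^sub>A = \<parallel>Sz\<parallel>\<^sub>A\<^sup>2\<close> and \<open>\<langle>SS\<^sup>\<sharp>\<^sup>A z,z\<rangle>\<^sub>A = \<parallel>S\<^sup>\<sharp>\<^sup>Az\<parallel>\<^sub>A\<^sup>2\<close>, and
  \<open>\<parallel>S\<^sup>\<sharp>\<^sup>Az\<parallel>\<^sub>A \<le> \<parallel>S\<parallel>\<^sub>A \<parallel>z\<parallel>\<^sub>A\<close>; hence both Crawford numbers are at most \<open>\<parallel>S\<parallel>\<^sub>A\<^sup>2\<close>,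
  and so is the square root of their product. This already gives the inequality.

  The analytic content is that \<open>\<parallel>S\<parallel>\<^sub>A\<close> is finite. If \<open>AR = S\<^sup>*A\<close> with \<open>R\<close> bounded, then
  \<open>T = RS\<close> is \<open>A\<close>-selfadjoint and \<open>\<parallel>Sx\<parallel>\<^sub>A\<^sup>2 = \<langle>Tx,x\<rangle>\<^sub>A\<close>. For \<open>b\<^sub>k = \<parallel>T\<^sup>kx\<parallel>\<^sub>A\<^sup>2\<close>,
  Cauchy--Schwarz gives \<open>b\<^sub>k\<^sup>2 \<le> b\<^sub>0 b\<^sub>2\<^sub>k\<close>, while \<open>b\<^sub>k = O(\<parallel>T\<parallel>\<^sup>2\<^sup>k)\<close>; iterating the first
  inequality along \<open>k = 2\<^sup>n\<close> yields \<open>\<parallel>Tx\<parallel>\<^sub>A \<le> \<parallel>T\<parallel> \<parallel>x\<parallel>\<^sub>A\<close>. The Hilbert space adjoint and the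
  Moore--Penrose inverse are well defined thanks to the projection theorem and Riesz
  representation.\<close>

lemma scaleC_zero_right [simp]: "scaleC c (0::'a::chilbert) = 0"
  by (metis add_cancel_right_right scaleC_add_right)

lemma scaleC_zero_left [simp]: "scaleC 0 (x::'a::chilbert) = 0"
  by (metis of_real_0 scaleR_scaleC scaleR_zero_left)

lemma cinner_zero_left [simp]: "cinner (0::'a::chilbert) y = 0"
  by (metis cinner_scaleC_left mult_zero_left scaleC_zero_left)

lemma cinner_diff_left: "cinner (x - y) z = cinner x z - cinner (y::'a::chilbert) z"
  by (metis add_diff_cancel cinner_add_left diff_add_cancel)

lemma cinner_add_right: "cinner (x::'a::chilbert) (y + z) = cinner x y + cinner x z"
  by (metis cinner_add_left cinner_commute complex_cnj_add)

lemma cinner_diff_right: "cinner (x::'a::chilbert) (y - z) = cinner x y - cinner x z"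
  by (metis cinner_commute cinner_diff_left complex_cnj_diff)

lemma cinner_scaleC_right: "cinner (x::'a::chilbert) (scaleC c y) = cnj c * cinner x y"
  by (metis cinner_commute cinner_scaleC_left complex_cnj_mult)

lemma cinner_zero_right [simp]: "cinner (x::'a::chilbert) 0 = 0"
  by (metis cinner_commute cinner_zero_left complex_cnj_zero)

lemma cinner_self_eq_0_iff [simp]: "cinner (x::'a::chilbert) x = 0 \<longleftrightarrow> x = 0"
  by (simp add: cinner_self_norm)

lemma cinner_ext: "(\<And>x. cinner x a = cinner x b) \<Longrightarrow> a = (b::'a::chilbert)"
  by (metis cinner_diff_right cinner_self_eq_0_iff diff_eq_diff_eq diff_self)

lemma clinear_add: "clinear T \<Longrightarrow> T (x + y) = T x + T y"
  by (simp add: clinear_def)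

lemma clinear_scaleC: "clinear T \<Longrightarrow> T (scaleC c x) = scaleC c (T x)"
  by (simp add: clinear_def)

lemma clinear_scaleR: "clinear T \<Longrightarrow> T (scaleR r x) = scaleR r (T x)"
  by (simp add: clinear_scaleC scaleR_scaleC)

lemma clinear_diff: "clinear T \<Longrightarrow> T (x - y) = T x - T y"
  by (metis add_diff_cancel clinear_add diff_add_cancel)

lemma bounded_op_clinear: "bounded_op T \<Longrightarrow> clinear T"
  by (simp add: bounded_op_def)

lemma bounded_op_bounded_linear:
  assumes "bounded_op T"
  shows "bounded_linear T"
proof -
  obtain K where "\<And>x. norm (T x) \<le> K * norm x" using assms bounded_op_def by blast
  with assms show ?thesis
    by (intro bounded_linear_intro[where K=K])
      (simp_all add: bounded_op_clinear clinear_add clinear_scaleR mult.commute)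
qed

lemma bounded_op_pos_bound:
  assumes "bounded_op T"
  obtains K where "K > 0" "\<And>x. norm (T x) \<le> K * norm x"
  using bounded_linear.pos_bounded[OF bounded_op_bounded_linear[OF assms]]
  by (metis mult.commute)

lemma cnj_mult_self: "cnj z * z = complex_of_real ((cmod z)\<^sup>2)"
  by (metis complex_norm_square mult.commute)

section \<open>Semi-inner products\<close>

locale semi_inner_product =
  fixes f :: "'a::chilbert \<Rightarrow> 'a \<Rightarrow> complex"
  assumes add_left: "f (x + y) z = f x z + f y z"
    and scaleC_left: "f (scaleC c x) z = c * f x z"
    and conj_sym: "f x y = cnj (f y x)"
    and Re_self_nonneg: "0 \<le> Re (f x x)"
begin

lemma self_real: "f x x = complex_of_real (Re (f x x))"
  by (metis complex_eq_iff conj_sym Re_complex_of_real Im_complex_of_real cnj.sel(2) neg_equal_zero)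

lemma diff_left: "f (x - y) z = f x z - f y z"
  by (metis add_diff_cancel add_left diff_add_cancel)

lemma diff_right: "f z (x - y) = f z x - f z y"
  by (metis complex_cnj_diff conj_sym diff_left)

lemma scaleC_right: "f z (scaleC c x) = cnj c * f z x"
  by (metis complex_cnj_mult conj_sym scaleC_left)

lemma Re_self_diff_scaleC:
  "Re (f (x - scaleC t y) (x - scaleC t y))
     = Re (f x x) - 2 * Re (cnj t * f x y) + (cmod t)\<^sup>2 * Re (f y y)"
proof -
  have "f (x - scaleC t y) (x - scaleC t y)
      = f x x - cnj t * f x y - t * f y x + (t * cnj t) * f y y"
    by (simp add: diff_left diff_right scaleC_left scaleC_right algebra_simps)
  moreover have "Re (t * f y x) = Re (cnj t * f x y)"
    by (metis conj_sym complex_cnj_cnj complex_cnj_mult cnj.sel(1))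
  moreover have "Re ((t * cnj t) * f y y) = (cmod t)\<^sup>2 * Re (f y y)"
    by (subst self_real) (metis Re_complex_of_real cnj_mult_self mult.commute of_real_mult)
  ultimately show ?thesis by simp
qed

text \<open>The step size \<open>t = f x y / f y y\<close> minimises the quadratic above.\<close>
lemma Re_self_diff_scaleC_optimal:
  fixes x y :: 'a
  assumes pos: "Re (f y y) > 0"
  defines "t \<equiv> f x y / complex_of_real (Re (f y y))"
  shows "Re (f (x - scaleC t y) (x - scaleC t y)) = Re (f x x) - (cmod (f x y))\<^sup>2 / Re (f y y)"
proof -
  have "Re (cnj t * f x y) = (cmod (f x y))\<^sup>2 / Re (f y y)"
    unfolding t_def by (simp add: cnj_mult_self)
  moreover have "(cmod t)\<^sup>2 * Re (f y y) = (cmod (f x y))\<^sup>2 / Re (f y y)"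
    unfolding t_def using pos by (simp add: norm_divide power_divide power2_eq_square)
  ultimately show ?thesis unfolding Re_self_diff_scaleC by simp
qed

lemma Cauchy_Schwarz: "(cmod (f x y))\<^sup>2 \<le> Re (f x x) * Re (f y y)"
proof (cases "Re (f y y) > 0")
  case True
  have "0 \<le> Re (f x x) - (cmod (f x y))\<^sup>2 / Re (f y y)"
    using Re_self_diff_scaleC_optimal[OF True] Re_self_nonneg by metis
  with True show ?thesis by (simp add: pos_divide_le_eq)
next
  case False
  then have yy: "Re (f y y) = 0" using Re_self_nonneg[of y] by simp
  show ?thesis
  proof (rule ccontr)
    assume "\<not> ?thesis"
    then have pos: "(cmod (f x y))\<^sup>2 > 0" using yy by simp
    define s where "s = (Re (f x x) + 1) / (2 * (cmod (f x y))\<^sup>2)"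
    have "Re (cnj (complex_of_real s * f x y) * f x y) = s * (cmod (f x y))\<^sup>2"
      by (simp add: mult.assoc cnj_mult_self)
    then have "Re (f (x - scaleC (of_real s * f x y) y) (x - scaleC (of_real s * f x y) y))
        = Re (f x x) - 2 * (s * (cmod (f x y))\<^sup>2)"
      unfolding Re_self_diff_scaleC yy by simp
    also have "\<dots> = -1" unfolding s_def using pos by (simp add: field_simps)
    finally show False using Re_self_nonneg by (metis neg_0_le_iff_le not_one_le_zero)
  qed
qed

lemma funpow_selfadjoint:
  assumes "\<And>u v. f (T u) v = f u (T v)"
  shows "f ((T ^^ k) u) v = f u ((T ^^ k) v)"
proof (induction k arbitrary: u v)
  case (Suc k)
  then show ?case by (simp add: assms funpow_swap1)
qed simp

lemma Cauchy_Schwarz_sqrt: "cmod (f x y) \<le> sqrt (Re (f x x)) * sqrt (Re (f y y))"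
  by (metis Cauchy_Schwarz real_le_rsqrt real_sqrt_mult)

lemma orthogonal_if_minimal:
  assumes min: "\<And>t. Re (f x x) \<le> Re (f (x - scaleC t y) (x - scaleC t y))"
  shows "f x y = 0"
proof (cases "Re (f y y) > 0")
  case True
  have "Re (f x x) \<le> Re (f x x) - (cmod (f x y))\<^sup>2 / Re (f y y)"
    using min Re_self_diff_scaleC_optimal[OF True] by metis
  with True show ?thesis by (simp add: divide_le_0_iff)
next
  case False
  then have "Re (f y y) = 0" using Re_self_nonneg[of y] by simp
  then have "Re (f x x) \<le> Re (f x x) - 2 * (cmod (f x y))\<^sup>2"
    using min[of "f x y"] unfolding Re_self_diff_scaleC by (simp add: cnj_mult_self)
  then show ?thesis by simp
qed

end

interpretation cinner: semi_inner_product "cinner :: 'a::chilbert \<Rightarrow> 'a \<Rightarrow> complex"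
proof
  fix x y z :: 'a and c
  show "cinner (x + y) z = cinner x z + cinner y z" by (rule cinner_add_left)
  show "cinner (scaleC c x) z = c * cinner x z" by (rule cinner_scaleC_left)
  show "cinner x y = cnj (cinner y x)" by (rule cinner_commute)
  show "0 \<le> Re (cinner x x)" by (simp add: cinner_self_norm)
qed

lemma cinner_Cauchy_Schwarz: "cmod (cinner x y) \<le> norm x * norm (y::'a::chilbert)"
  using cinner.Cauchy_Schwarz_sqrt[of x y] by (simp add: cinner_self_norm)

lemma power2_norm_eq_cinner: "(norm x)\<^sup>2 = Re (cinner x (x::'a::chilbert))"
  by (simp add: cinner_self_norm)

section \<open>Projection theorem, Riesz representation and adjoints\<close>

lemma parallelogram_law:
  "(norm (x + y))\<^sup>2 + (norm (x - y))\<^sup>2 = 2 * (norm x)\<^sup>2 + 2 * (norm (y::'a::chilbert))\<^sup>2"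
  unfolding power2_norm_eq_cinner
  by (simp add: cinner_add_left cinner_add_right cinner_diff_left cinner_diff_right)

lemma Cauchy_if_dist_sq_le:
  fixes s :: "nat \<Rightarrow> 'a::metric_space"
  assumes dist_le: "\<And>j k. (dist (s j) (s k))\<^sup>2 \<le> e j + e k" and "e \<longlonglongrightarrow> 0"
  shows "Cauchy s"
proof (rule metric_CauchyI)
  fix \<epsilon> :: real assume "0 < \<epsilon>"
  then obtain M where M: "\<And>n. n \<ge> M \<Longrightarrow> \<bar>e n\<bar> < \<epsilon>\<^sup>2 / 2"
    using LIMSEQ_D[OF \<open>e \<longlonglongrightarrow> 0\<close>, of "\<epsilon>\<^sup>2 / 2"] by auto
  have "dist (s j) (s k) < \<epsilon>" if "j \<ge> M" "k \<ge> M" for j k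
  proof -
    have "(dist (s j) (s k))\<^sup>2 < \<epsilon>\<^sup>2" using dist_le[of j k] M[OF that(1)] M[OF that(2)] by linarith
    then show ?thesis using \<open>0 < \<epsilon>\<close> by (simp add: power_less_imp_less_base)
  qed
  then show "\<exists>M. \<forall>m\<ge>M. \<forall>n\<ge>M. dist (s m) (s n) < \<epsilon>" by blast
qed

lemma nearest_point_exists:
  fixes N :: "'a::chilbert set"
  assumes "closed N" "convex N" "N \<noteq> {}"
  shows "\<exists>n\<in>N. \<forall>m\<in>N. norm (u - n) \<le> norm (u - m)"
proof -
  define D where "D = (INF n\<in>N. (norm (u - n))\<^sup>2)"
  have bdd: "bdd_below ((\<lambda>n. (norm (u - n))\<^sup>2) ` N)" by (rule bdd_belowI[of _ 0]) auto
  have D_le: "D \<le> (norm (u - n))\<^sup>2" if "n \<in> N" for n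
    unfolding D_def using bdd that by (rule cINF_lower)
  have "\<exists>n\<in>N. (norm (u - n))\<^sup>2 < D + 1 / real (Suc k)" for k
    using cINF_less_iff[OF assms(3) bdd, of "D + 1 / real (Suc k)"] unfolding D_def by simp
  then obtain s where s_in: "\<And>k. s k \<in> N" and s_near: "\<And>k. (norm (u - s k))\<^sup>2 < D + 1 / real (Suc k)"
    by metis
  have null: "(\<lambda>k. c / real (Suc k)) \<longlonglongrightarrow> 0" for c :: real
    using LIMSEQ_Suc[OF lim_const_over_n] .
  have "(dist (s j) (s k))\<^sup>2 \<le> 2 / real (Suc j) + 2 / real (Suc k)" for j k
  proof -
    define m where "m = scaleR (1/2) (s j + s k)"
    have "m \<in> N"
      unfolding m_def using convexD[OF assms(2) s_in s_in, of "1/2" "1/2"] by (simp add: scaleR_add_right)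
    have "(u - s j) + (u - s k) = scaleR 2 (u - m)" unfolding m_def by (simp add: algebra_simps scaleR_2)
    then have "(norm ((u - s j) + (u - s k)))\<^sup>2 = 4 * (norm (u - m))\<^sup>2" by (simp add: power2_eq_square)
    then have "(norm (s j - s k))\<^sup>2 = 2 * (norm (u - s j))\<^sup>2 + 2 * (norm (u - s k))\<^sup>2 - 4 * (norm (u - m))\<^sup>2"
      using parallelogram_law[of "u - s j" "u - s k"] by (simp add: norm_minus_commute)
    then show ?thesis using D_le[OF \<open>m \<in> N\<close>] s_near[of j] s_near[of k] by (simp add: dist_norm)
  qed
  then have "Cauchy s" using null by (rule Cauchy_if_dist_sq_le)
  then obtain l where l: "s \<longlonglongrightarrow> l" using Cauchy_convergent_iff convergent_def by blast
  have "l \<in> N" using assms(1) closed_sequential_limits l s_in by blast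
  moreover have "(norm (u - l))\<^sup>2 \<le> D"
  proof (rule LIMSEQ_le)
    show "(\<lambda>k. (norm (u - s k))\<^sup>2) \<longlonglongrightarrow> (norm (u - l))\<^sup>2" by (intro tendsto_intros l)
    show "(\<lambda>k. D + 1 / real (Suc k)) \<longlonglongrightarrow> D" using tendsto_add[OF tendsto_const null] by simp
    show "\<exists>N. \<forall>k\<ge>N. (norm (u - s k))\<^sup>2 \<le> D + 1 / real (Suc k)" using s_near less_imp_le by blast
  qed
  ultimately show ?thesis using D_le by (meson order_trans power2_le_imp_le norm_ge_zero)
qed

definition csubspace :: "'a::chilbert set \<Rightarrow> bool" where
  "csubspace N \<longleftrightarrow> 0 \<in> N \<and> (\<forall>x\<in>N. \<forall>y\<in>N. x + y \<in> N) \<and> (\<forall>c. \<forall>x\<in>N. scaleC c x \<in> N)"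

lemma csubspace_convex: "csubspace N \<Longrightarrow> convex N"
  unfolding csubspace_def convex_def scaleR_scaleC by blast

lemma clinear_zero: "clinear T \<Longrightarrow> T 0 = 0"
  using clinear_add[of T 0 0] by simp

lemma clinear_kernel_csubspace: "clinear T \<Longrightarrow> csubspace {x. T x = 0}"
  unfolding csubspace_def by (simp add: clinear_zero clinear_add clinear_scaleC)

lemma bounded_linear_kernel_closed: "bounded_linear g \<Longrightarrow> closed {x. g x = 0}"
  by (intro closed_Collect_eq linear_continuous_on continuous_on_const)

lemma orthogonal_projection_exists:
  assumes "closed N" "csubspace N"
  shows "\<exists>n\<in>N. \<forall>m\<in>N. cinner (u - n) m = 0"
proof -
  have "0 \<in> N" using assms(2) csubspace_def by blast
  then obtain n where "n \<in> N" and nearest: "\<And>m. m \<in> N \<Longrightarrow> norm (u - n) \<le> norm (u - m)"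
    using nearest_point_exists[OF assms(1) csubspace_convex[OF assms(2)]] by blast
  have "cinner (u - n) m = 0" if "m \<in> N" for m
  proof (rule cinner.orthogonal_if_minimal)
    fix t
    have "n + scaleC t m \<in> N" using assms(2) \<open>n \<in> N\<close> that unfolding csubspace_def by blast
    then have "(norm (u - n))\<^sup>2 \<le> (norm (u - n - scaleC t m))\<^sup>2"
      using nearest by (simp add: diff_diff_eq)
    then show "Re (cinner (u - n) (u - n)) \<le> Re (cinner (u - n - scaleC t m) (u - n - scaleC t m))"
      by (simp add: power2_norm_eq_cinner)
  qed
  with \<open>n \<in> N\<close> show ?thesis by blast
qed

lemma Riesz_representation:
  fixes g :: "'a::chilbert \<Rightarrow> complex"
  assumes add: "\<And>x y. g (x + y) = g x + g y" and scale: "\<And>c x. g (scaleC c x) = c * g x"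
    and bound: "\<And>x. cmod (g x) \<le> K * norm x"
  shows "\<exists>v. \<forall>x. g x = cinner x v"
proof (cases "\<forall>x. g x = 0")
  case True
  then show ?thesis by (intro exI[of _ 0]) simp
next
  case False
  then obtain u where "g u \<noteq> 0" by blast
  have "bounded_linear g"
    by (rule bounded_linear_intro[where K=K])
      (simp_all add: add bound scale scaleR_scaleC scaleR_conv_of_real mult.commute)
  moreover have "g 0 = 0" using add[of 0 0] by simp
  then have "csubspace {x. g x = 0}" unfolding csubspace_def by (simp add: add scale)
  ultimately obtain n where "g n = 0" and orth: "\<And>m. g m = 0 \<Longrightarrow> cinner (u - n) m = 0"
    using orthogonal_projection_exists[OF bounded_linear_kernel_closed] by blast
  define p where "p = u - n"
  have diff: "g (x - y) = g x - g y" for x y by (metis add eq_diff_eq)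
  have "g p \<noteq> 0" unfolding p_def diff \<open>g n = 0\<close> using \<open>g u \<noteq> 0\<close> by simp
  then have "cinner p p \<noteq> 0" using \<open>g 0 = 0\<close> by auto
  have "g x = cinner x (scaleC (cnj (g p / cinner p p)) p)" for x
  proof -
    text \<open>\<open>g x \<cdot> p - g p \<cdot> x\<close> lies in the kernel of \<open>g\<close>, hence is orthogonal to \<open>p\<close>.\<close>
    have "g (scaleC (g x) p - scaleC (g p) x) = 0" by (simp add: diff scale)
    then have "cinner (scaleC (g x) p - scaleC (g p) x) p = 0"
      using orth[folded p_def] by (metis cinner_commute complex_cnj_zero)
    then have "g x * cinner p p = g p * cinner x p" by (simp add: cinner_diff_left cinner_scaleC_left)
    with \<open>cinner p p \<noteq> 0\<close> show ?thesis by (simp add: cinner_scaleC_right field_simps)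
  qed
  then show ?thesis by blast
qed

lemma cinner_adjoint:
  assumes "bounded_op S"
  shows "cinner (S x) y = cinner x (adjoint S y)"
proof -
  obtain K where K: "\<And>x. norm (S x) \<le> K * norm x" using assms bounded_op_def by blast
  have "\<exists>v. \<forall>x. cinner (S x) y = cinner x v" for y
  proof (rule Riesz_representation[where K = "K * norm y"])
    show "cinner (S (x + z)) y = cinner (S x) y + cinner (S z) y" for x z
      by (simp add: clinear_add[OF bounded_op_clinear[OF assms]] cinner_add_left)
    show "cinner (S (scaleC c x)) y = c * cinner (S x) y" for c x
      by (simp add: clinear_scaleC[OF bounded_op_clinear[OF assms]] cinner_scaleC_left)
    show "cmod (cinner (S x) y) \<le> K * norm y * norm x" for x
      using cinner_Cauchy_Schwarz[of "S x" y] mult_right_mono[OF K[of x], of "norm y"]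
      by (simp add: algebra_simps)
  qed
  then obtain T' where T': "\<And>x y. cinner (S x) y = cinner x (T' y)" by (meson choice)
  have "T'' = T'" if "\<forall>x y. cinner (S x) y = cinner x (T'' y)" for T''
  proof (rule ext, rule cinner_ext)
    show "cinner x (T'' y) = cinner x (T' y)" for x y using that T' by metis
  qed
  with T' have "\<exists>!T'. \<forall>x y. cinner (S x) y = cinner x (T' y)" by blast
  from theI'[OF this] show ?thesis unfolding adjoint_def by blast
qed

lemma A_mp_inverse_A:
  assumes "bounded_op A"
  shows "A (mp_inverse A (A u)) = A u"
proof -
  have lin: "clinear A" using assms by (rule bounded_op_clinear)
  let ?P = "\<lambda>x. (\<forall>z. A z = 0 \<longrightarrow> cinner x z = 0) \<and> (\<forall>w. cinner (A u - A x) (A w) = 0)"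
  obtain n where "A n = 0" and orth: "\<And>m. A m = 0 \<Longrightarrow> cinner (u - n) m = 0"
    using orthogonal_projection_exists[OF bounded_linear_kernel_closed clinear_kernel_csubspace, of A u]
      bounded_op_bounded_linear[OF assms] lin by blast
  have "?P (u - n)" using orth \<open>A n = 0\<close> by (simp add: clinear_diff[OF lin])
  moreover have "x = y" if "?P x" "?P y" for x y
  proof -
    have "cinner ((A u - A x) - (A u - A y)) (A (y - x)) = 0"
      using that by (simp only: cinner_diff_left) simp
    then have "A (y - x) = 0" by (simp add: clinear_diff[OF lin])
    then have "cinner (y - x) (y - x) = 0" using that by (simp add: cinner_diff_left)
    then show ?thesis by simp
  qed
  ultimately have "\<exists>!x. ?P x" by blast
  then have "?P (mp_inverse A (A u))" unfolding mp_inverse_def by (rule theI')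
  then have "cinner (A u - A (mp_inverse A (A u))) (A u - A (mp_inverse A (A u))) = 0"
    by (metis clinear_diff[OF lin])
  then show ?thesis by simp
qed

section \<open>The power trick\<close>

lemma norm_funpow_le:
  fixes T :: "'a::real_normed_vector \<Rightarrow> 'a"
  assumes "\<And>x. norm (T x) \<le> K * norm x" "0 \<le> K"
  shows "norm ((T ^^ k) x) \<le> K ^ k * norm x"
proof (induction k)
  case (Suc k)
  have "norm ((T ^^ Suc k) x) \<le> K * norm ((T ^^ k) x)" using assms(1) by simp
  also have "\<dots> \<le> K * (K ^ k * norm x)" using Suc assms(2) by (rule mult_left_mono)
  finally show ?case by simp
qed simp

text \<open>Iterating the doubling inequality gives \<open>b\<^sub>1\<^sup>2\<^sup>n \<le> b\<^sub>0\<^sup>2\<^sup>n\<^sup>-\<^sup>1 b\<^sub>2\<^sub>n\<close>, which grows at most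
  like \<open>N\<^sup>2\<^sup>n\<close>; this forces \<open>b\<^sub>1 \<le> N b\<^sub>0\<close>.\<close>
lemma doubling_inequality_bound:
  fixes b :: "nat \<Rightarrow> real"
  assumes nonneg: "\<And>k. 0 \<le> b k" and doubling: "\<And>k. (b k)\<^sup>2 \<le> b 0 * b (2 * k)"
    and growth: "\<And>k. b k \<le> C * N ^ k" and "N > 0"
  shows "b 1 \<le> N * b 0"
proof (cases "b 0 = 0")
  case True
  then show ?thesis using doubling[of 1] by simp
next
  case False
  then have "b 0 > 0" using nonneg[of 0] by simp
  define a where "a k = b k / b 0" for k
  have a_nonneg: "0 \<le> a k" for k unfolding a_def using nonneg \<open>b 0 > 0\<close> by simp
  have a_pow: "a 1 ^ 2 ^ n \<le> a (2 ^ n)" for n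
  proof (induction n)
    case (Suc n)
    have "a 1 ^ 2 ^ Suc n = (a 1 ^ 2 ^ n)\<^sup>2" by (simp add: power_mult[symmetric] mult.commute)
    also have "\<dots> \<le> (a (2 ^ n))\<^sup>2" using Suc a_nonneg by (intro power_mono) simp_all
    also have "\<dots> \<le> a (2 ^ Suc n)"
      using doubling[of "2 ^ n"] \<open>b 0 > 0\<close> by (simp add: a_def power_divide power2_eq_square field_simps)
    finally show ?case .
  qed simp
  have bounded: "(a 1 / N) ^ 2 ^ n \<le> C / b 0" for n
  proof -
    have "a (2 ^ n) \<le> C / b 0 * N ^ 2 ^ n"
      using divide_right_mono[OF growth[of "2 ^ n"], of "b 0"] \<open>b 0 > 0\<close> by (simp add: a_def)
    with a_pow have "a 1 ^ 2 ^ n \<le> C / b 0 * N ^ 2 ^ n" by (rule order_trans)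
    then show ?thesis using \<open>N > 0\<close> by (simp add: power_divide pos_divide_le_eq)
  qed
  have "a 1 / N \<le> 1"
  proof (rule ccontr)
    assume "\<not> a 1 / N \<le> 1"
    then obtain n where "C / b 0 < (a 1 / N) ^ n" using real_arch_pow by (metis not_le)
    also have "\<dots> \<le> (a 1 / N) ^ 2 ^ n"
      using \<open>\<not> a 1 / N \<le> 1\<close> by (intro power_increasing) (simp_all add: less_imp_le)
    finally show False using bounded[of n] by simp
  qed
  then show ?thesis using \<open>b 0 > 0\<close> \<open>N > 0\<close> by (simp add: a_def field_simps)
qed

section \<open>The \<open>A\<close>-semi-inner product\<close>

lemma positive_op_bounded_op: "positive_op A \<Longrightarrow> bounded_op A"
  by (simp add: positive_op_def)

text \<open>Polarization: a form whose quadratic form is real is Hermitian.\<close>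
lemma positive_op_cinner_conj_sym:
  assumes "positive_op A"
  shows "cinner (A x) y = cnj (cinner (A y) x)"
proof -
  have lin: "clinear A" using assms by (simp add: bounded_op_clinear positive_op_bounded_op)
  have real: "Im (cinner (A z) z) = 0" for z using assms positive_op_def by blast
  define a b where "a = cinner (A x) y" and "b = cinner (A y) x"
  have "cinner (A (x + y)) (x + y) = cinner (A x) x + a + b + cinner (A y) y"
    unfolding a_def b_def by (simp add: clinear_add[OF lin] cinner_add_left cinner_add_right)
  then have "Im a + Im b = 0" using real[of "x + y"] real[of x] real[of y] by simp
  have "cinner (A (x + scaleC \<i> y)) (x + scaleC \<i> y) = cinner (A x) x - \<i> * a + \<i> * b + cinner (A y) y"
    unfolding a_def b_def
    by (simp add: clinear_add[OF lin] clinear_scaleC[OF lin] cinner_add_left cinner_add_right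
        cinner_scaleC_left cinner_scaleC_right algebra_simps)
  then have "Re b - Re a = 0" using real[of "x + scaleC \<i> y"] real[of x] real[of y] by simp
  with \<open>Im a + Im b = 0\<close> show ?thesis unfolding a_def[symmetric] b_def[symmetric] by (simp add: complex_eq_iff)
qed

lemma semi_inner_product_A_inner:
  assumes "positive_op A"
  shows "semi_inner_product (A_inner A)"
proof
  have lin: "clinear A" using assms by (simp add: bounded_op_clinear positive_op_bounded_op)
  fix x y z c
  show "A_inner A (x + y) z = A_inner A x z + A_inner A y z"
    by (simp add: A_inner_def clinear_add[OF lin] cinner_add_left)
  show "A_inner A (scaleC c x) z = c * A_inner A x z"
    by (simp add: A_inner_def clinear_scaleC[OF lin] cinner_scaleC_left)
  show "A_inner A x y = cnj (A_inner A y x)"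
    unfolding A_inner_def by (rule positive_op_cinner_conj_sym[OF assms])
  show "0 \<le> Re (A_inner A x x)" using assms by (simp add: A_inner_def positive_op_def)
qed

lemma power2_A_norm: "positive_op A \<Longrightarrow> (A_norm A x)\<^sup>2 = Re (A_inner A x x)"
  unfolding A_norm_def using semi_inner_product.Re_self_nonneg[OF semi_inner_product_A_inner] by simp

lemma A_norm_nonneg: "positive_op A \<Longrightarrow> 0 \<le> A_norm A x"
  unfolding A_norm_def using semi_inner_product.Re_self_nonneg[OF semi_inner_product_A_inner] by simp

lemma cmod_A_inner_self: "positive_op A \<Longrightarrow> cmod (A_inner A x x) = (A_norm A x)\<^sup>2"
  by (metis abs_of_nonneg norm_of_real power2_A_norm semi_inner_product.Re_self_nonneg
      semi_inner_product.self_real semi_inner_product_A_inner)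

lemma A_Cauchy_Schwarz: "positive_op A \<Longrightarrow> cmod (A_inner A x y) \<le> A_norm A x * A_norm A y"
  unfolding A_norm_def by (rule semi_inner_product.Cauchy_Schwarz_sqrt[OF semi_inner_product_A_inner])

lemma A_norm_scaleR:
  assumes "positive_op A"
  shows "A_norm A (scaleR r x) = \<bar>r\<bar> * A_norm A x"
proof -
  interpret semi_inner_product "A_inner A" by (rule semi_inner_product_A_inner[OF assms])
  have "Re (A_inner A (scaleR r x) (scaleR r x)) = r\<^sup>2 * Re (A_inner A x x)"
    by (simp add: scaleR_scaleC scaleC_left scaleC_right power2_eq_square)
  then show ?thesis unfolding A_norm_def by (simp add: real_sqrt_mult)
qed

lemma A_norm_selfadjoint_le:
  assumes pos: "positive_op A"
    and selfadj: "\<And>u v. A_inner A (T u) v = A_inner A u (T v)"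
    and bound: "\<And>x. norm (T x) \<le> K * norm x" and "K > 0"
  shows "A_norm A (T x) \<le> K * A_norm A x"
proof -
  interpret semi_inner_product "A_inner A" by (rule semi_inner_product_A_inner[OF pos])
  obtain KA where KA: "\<And>x. norm (A x) \<le> KA * norm x" "KA > 0"
    using bounded_op_pos_bound[OF positive_op_bounded_op[OF pos]] by blast
  define b where "b k = (A_norm A ((T ^^ k) x))\<^sup>2" for k
  have "b 1 \<le> K\<^sup>2 * b 0"
  proof (rule doubling_inequality_bound)
    show "0 \<le> b k" for k unfolding b_def by simp
    show "(b k)\<^sup>2 \<le> b 0 * b (2 * k)" for k
    proof -
      have "b k = Re (A_inner A ((T ^^ (2 * k)) x) x)"
        unfolding b_def power2_A_norm[OF pos] funpow_selfadjoint[OF selfadj]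
        by (simp add: mult_2 funpow_add)
      then have "(b k)\<^sup>2 \<le> (cmod (A_inner A ((T ^^ (2 * k)) x) x))\<^sup>2"
        by (metis abs_Re_le_cmod abs_ge_zero power2_abs power_mono)
      also have "\<dots> \<le> b (2 * k) * b 0"
        using Cauchy_Schwarz unfolding b_def power2_A_norm[OF pos] by simp
      finally show ?thesis by (simp add: mult.commute)
    qed
    show "b k \<le> (KA * (norm x)\<^sup>2) * (K\<^sup>2) ^ k" for k
    proof -
      have "b k \<le> norm (A ((T ^^ k) x)) * norm ((T ^^ k) x)"
        unfolding b_def power2_A_norm[OF pos] A_inner_def
        using complex_Re_le_cmod cinner_Cauchy_Schwarz order_trans by blast
      also have "\<dots> \<le> KA * (norm ((T ^^ k) x))\<^sup>2"
        using mult_right_mono[OF KA(1) norm_ge_zero] by (simp add: power2_eq_square mult.assoc)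
      also have "\<dots> \<le> KA * (K ^ k * norm x)\<^sup>2"
        using norm_funpow_le[OF bound] \<open>K > 0\<close> KA(2) by (intro mult_left_mono power_mono) auto
      finally show ?thesis by (simp add: power_mult_distrib power_mult[symmetric] mult.commute mult.left_commute)
    qed
  qed (rule zero_less_power[OF \<open>K > 0\<close>])
  then have "(A_norm A (T x))\<^sup>2 \<le> (K * A_norm A x)\<^sup>2" by (simp add: b_def power_mult_distrib)
  then show ?thesis using \<open>K > 0\<close> A_norm_nonneg[OF pos] by (meson power2_le_imp_le mult_nonneg_nonneg less_imp_le)
qed

definition A_bounded :: "('a::chilbert \<Rightarrow> 'a) \<Rightarrow> ('a \<Rightarrow> 'a) \<Rightarrow> bool" where
  "A_bounded A T \<longleftrightarrow> (\<exists>K. \<forall>x. A_norm A (T x) \<le> K * A_norm A x)"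

lemma A_norm_eq_0_if_A_sphere_empty:
  assumes "positive_op A" "A_sphere A = {}"
  shows "A_norm A x = 0"
proof (rule ccontr)
  assume "A_norm A x \<noteq> 0"
  then have "A_norm A x > 0" using A_norm_nonneg[OF assms(1)] by (simp add: order_le_neq_trans)
  then have "scaleR (1 / A_norm A x) x \<in> A_sphere A"
    unfolding A_sphere_def by (simp add: A_norm_scaleR[OF assms(1)])
  with assms(2) show False by blast
qed

lemma A_norm_le_A_opnorm:
  assumes pos: "positive_op A" and "clinear T" "A_bounded A T"
  shows "A_norm A (T x) \<le> A_opnorm A T * A_norm A x"
proof (cases "A_sphere A = {}")
  case True
  then show ?thesis using A_norm_eq_0_if_A_sphere_empty[OF pos] by simp
next
  case False
  obtain K where K: "\<And>x. A_norm A (T x) \<le> K * A_norm A x" using assms(3) A_bounded_def by blast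
  have bdd: "bdd_above ((\<lambda>z. A_norm A (T z)) ` A_sphere A)"
  proof (rule bdd_aboveI2)
    fix z assume "z \<in> A_sphere A"
    then show "A_norm A (T z) \<le> K" using K[of z] by (simp add: A_sphere_def)
  qed
  have sphere_le: "A_norm A (T z) \<le> A_opnorm A T" if "z \<in> A_sphere A" for z
    unfolding A_opnorm_def A_sup_def using False by (simp add: cSUP_upper[OF that bdd])
  show ?thesis
  proof (cases "A_norm A x = 0")
    case True
    then show ?thesis using K[of x] A_norm_nonneg[OF pos, of "T x"] by simp
  next
    case False
    then have a: "A_norm A x > 0" using A_norm_nonneg[OF pos, of x] by simp
    then have "scaleR (1 / A_norm A x) x \<in> A_sphere A"
      unfolding A_sphere_def by (simp add: A_norm_scaleR[OF pos])
    from sphere_le[OF this] a show ?thesis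
      by (simp add: clinear_scaleR[OF assms(2)] A_norm_scaleR[OF pos] divide_le_eq mult.commute)
  qed
qed

lemma A_opnorm_nonneg:
  assumes pos: "positive_op A" and "clinear T" "A_bounded A T"
  shows "0 \<le> A_opnorm A T"
proof (cases "A_sphere A = {}")
  case True
  then show ?thesis by (simp add: A_opnorm_def A_sup_def)
next
  case False
  then obtain z where "A_norm A z = 1" unfolding A_sphere_def by blast
  then show ?thesis
    using A_norm_le_A_opnorm[OF assms, of z] A_norm_nonneg[OF pos, of "T z"] by simp
qed

lemma power2_A_dw_radius_le:
  assumes pos: "positive_op A" and "clinear T" "A_bounded A T"
  shows "(A_dw_radius A T)\<^sup>2 \<le> (A_opnorm A T)\<^sup>2 + (A_opnorm A T) ^ 4"
proof (cases "A_sphere A = {}")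
  case True
  then show ?thesis by (simp add: A_dw_radius_def A_sup_def)
next
  case False
  let ?M = "A_opnorm A T"
  define g where "g z = sqrt ((cmod (A_inner A (T z) z))\<^sup>2 + (A_norm A (T z)) ^ 4)" for z
  have g_le: "g z \<le> sqrt (?M\<^sup>2 + ?M ^ 4)" if "z \<in> A_sphere A" for z
  proof -
    have "A_norm A (T z) \<le> ?M" using A_norm_le_A_opnorm[OF assms, of z] that by (simp add: A_sphere_def)
    moreover have "cmod (A_inner A (T z) z) \<le> A_norm A (T z)"
      using A_Cauchy_Schwarz[OF pos, of "T z" z] that by (simp add: A_sphere_def)
    ultimately show ?thesis
      unfolding g_def using A_norm_nonneg[OF pos, of "T z"]
      by (intro real_sqrt_le_mono add_mono power_mono) auto
  qed
  have "bdd_above (g ` A_sphere A)" using g_le by (rule bdd_aboveI2)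
  then have g_le_dw: "g z \<le> A_dw_radius A T" if "z \<in> A_sphere A" for z
    unfolding A_dw_radius_def A_sup_def g_def[symmetric] using False by (simp add: cSUP_upper[OF that])
  obtain z where "z \<in> A_sphere A" using False by blast
  have "0 \<le> g z" unfolding g_def using A_norm_nonneg[OF pos, of "T z"] by simp
  then have "0 \<le> A_dw_radius A T" using g_le_dw[OF \<open>z \<in> A_sphere A\<close>] by linarith
  moreover have "A_dw_radius A T \<le> sqrt (?M\<^sup>2 + ?M ^ 4)"
    unfolding A_dw_radius_def A_sup_def g_def[symmetric] using False g_le by (simp add: cSUP_least)
  ultimately have "(A_dw_radius A T)\<^sup>2 \<le> (sqrt (?M\<^sup>2 + ?M ^ 4))\<^sup>2" by (intro power_mono)
  also have "\<dots> = ?M\<^sup>2 + ?M ^ 4" by (simp add: zero_le_even_power)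
  finally show ?thesis .
qed

lemma A_crawford_nonneg: "0 \<le> A_crawford A T"
  unfolding A_crawford_def A_inf_def by (simp add: cINF_greatest)

lemma A_crawford_le:
  assumes "\<And>z. z \<in> A_sphere A \<Longrightarrow> cmod (A_inner A (T z) z) \<le> c" "0 \<le> c"
  shows "A_crawford A T \<le> c"
proof (cases "A_sphere A = {}")
  case True
  then show ?thesis by (simp add: A_crawford_def A_inf_def assms(2))
next
  case False
  then obtain z where "z \<in> A_sphere A" by blast
  have "bdd_below ((\<lambda>z. cmod (A_inner A (T z) z)) ` A_sphere A)" by (rule bdd_belowI2[where m=0]) simp
  then show ?thesis
    unfolding A_crawford_def A_inf_def using False assms(1) \<open>z \<in> A_sphere A\<close> by (simp add: cINF_lower2)
qed

section \<open>Operators in \<open>\<B>\<^sub>A(\<H>)\<close>\<close>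

lemma BA_clinear: "S \<in> BA A \<Longrightarrow> clinear S"
  by (simp add: BA_def bounded_op_clinear)

lemma A_inner_adjoint_right:
  assumes "bounded_op S" "A (R x) = adjoint S (A x)"
  shows "A_inner A (R x) z = A_inner A x (S z)"
proof -
  have "A_inner A (R x) z = cnj (cinner z (adjoint S (A x)))"
    unfolding A_inner_def assms(2) by (rule cinner_commute)
  also have "\<dots> = A_inner A x (S z)"
    unfolding A_inner_def cinner_adjoint[OF assms(1), symmetric] by (metis cinner_commute)
  finally show ?thesis .
qed

lemma BA_A_bounded:
  assumes pos: "positive_op A" and "S \<in> BA A"
  shows "A_bounded A S"
proof -
  interpret semi_inner_product "A_inner A" by (rule semi_inner_product_A_inner[OF pos])
  obtain R where "bounded_op R" and AR: "A \<circ> R = adjoint S \<circ> A" and "bounded_op S"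
    using assms(2) BA_def by blast
  obtain KR where KR: "KR > 0" "\<And>x. norm (R x) \<le> KR * norm x" using bounded_op_pos_bound[OF \<open>bounded_op R\<close>] by blast
  obtain KS where KS: "KS > 0" "\<And>x. norm (S x) \<le> KS * norm x" using bounded_op_pos_bound[OF \<open>bounded_op S\<close>] by blast
  have RS: "A_inner A (R (S u)) v = A_inner A (S u) (S v)" for u v
    using A_inner_adjoint_right[OF \<open>bounded_op S\<close>] AR by (metis comp_apply)
  have "A_inner A ((R \<circ> S) u) v = A_inner A u ((R \<circ> S) v)" for u v
    using RS conj_sym by (metis comp_apply)
  moreover have "norm ((R \<circ> S) x) \<le> (KR * KS) * norm x" for x
  proof -
    have "norm (R (S x)) \<le> KR * norm (S x)" by (rule KR(2))
    also have "\<dots> \<le> KR * (KS * norm x)" using KR(1) by (intro mult_left_mono KS(2)) simp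
    finally show ?thesis by (simp add: mult.assoc)
  qed
  ultimately have RS_le: "A_norm A (R (S x)) \<le> (KR * KS) * A_norm A x" for x
    using A_norm_selfadjoint_le[OF pos] KR(1) KS(1) by (metis comp_apply mult_pos_pos)
  have "A_norm A (S x) \<le> sqrt (KR * KS) * A_norm A x" for x
  proof -
    have "(A_norm A (S x))\<^sup>2 = Re (A_inner A (R (S x)) x)" unfolding power2_A_norm[OF pos] RS ..
    also have "\<dots> \<le> A_norm A (R (S x)) * A_norm A x"
      using complex_Re_le_cmod A_Cauchy_Schwarz[OF pos] order_trans by blast
    also have "\<dots> \<le> (KR * KS) * (A_norm A x)\<^sup>2"
      using mult_right_mono[OF RS_le A_norm_nonneg[OF pos], of x x] by (simp add: power2_eq_square mult.assoc)
    finally have "A_norm A (S x) \<le> sqrt ((KR * KS) * (A_norm A x)\<^sup>2)"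
      using A_norm_nonneg[OF pos] by (simp add: real_le_rsqrt)
    then show ?thesis using A_norm_nonneg[OF pos] by (simp add: real_sqrt_mult)
  qed
  then show ?thesis unfolding A_bounded_def by blast
qed

lemma A_A_adj:
  assumes "bounded_op A" "A \<circ> R = adjoint S \<circ> A"
  shows "A (A_adj A S x) = adjoint S (A x)"
  using A_mp_inverse_A[OF assms(1), of "R x"] assms(2) unfolding A_adj_def by (metis comp_apply)

lemma A_inner_A_adj:
  assumes "positive_op A" "S \<in> BA A"
  shows "A_inner A (A_adj A S x) z = A_inner A x (S z)"
proof -
  obtain R where "A \<circ> R = adjoint S \<circ> A" "bounded_op S" using assms(2) BA_def by blast
  then show ?thesis
    using A_inner_adjoint_right A_A_adj[OF positive_op_bounded_op[OF assms(1)]] by blast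
qed

lemma A_norm_A_adj_le:
  assumes pos: "positive_op A" and "S \<in> BA A"
  shows "A_norm A (A_adj A S z) \<le> A_opnorm A S * A_norm A z"
proof -
  define y where "y = A_adj A S z"
  have lin: "clinear S" using assms(2) by (rule BA_clinear)
  have "(A_norm A y)\<^sup>2 = Re (A_inner A z (S y))"
    unfolding power2_A_norm[OF pos] y_def A_inner_A_adj[OF assms] ..
  also have "\<dots> \<le> A_norm A z * A_norm A (S y)"
    using complex_Re_le_cmod A_Cauchy_Schwarz[OF pos] order_trans by blast
  also have "\<dots> \<le> A_norm A z * (A_opnorm A S * A_norm A y)"
    using A_norm_le_A_opnorm[OF pos lin BA_A_bounded[OF assms]] A_norm_nonneg[OF pos]
    by (rule mult_left_mono)
  finally have "A_norm A y * A_norm A y \<le> (A_opnorm A S * A_norm A z) * A_norm A y"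
    by (simp add: power2_eq_square ac_simps)
  then show ?thesis
    using A_opnorm_nonneg[OF pos lin BA_A_bounded[OF assms]] A_norm_nonneg[OF pos] unfolding y_def
    by (metis mult_le_cancel_right less_eq_real_def mult_nonneg_nonneg)
qed

lemma A_crawford_A_adj_comp_le:
  assumes pos: "positive_op A" and "S \<in> BA A"
  shows "A_crawford A (A_adj A S \<circ> S) \<le> (A_opnorm A S)\<^sup>2"
proof (rule A_crawford_le)
  have lin: "clinear S" using assms(2) by (rule BA_clinear)
  fix z assume "z \<in> A_sphere A"
  have "cmod (A_inner A ((A_adj A S \<circ> S) z) z) = (A_norm A (S z))\<^sup>2"
    by (simp add: A_inner_A_adj[OF assms] cmod_A_inner_self[OF pos])
  also have "\<dots> \<le> (A_opnorm A S)\<^sup>2"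
    using A_norm_le_A_opnorm[OF pos lin BA_A_bounded[OF assms], of z] \<open>z \<in> A_sphere A\<close>
      A_norm_nonneg[OF pos] by (intro power_mono) (simp_all add: A_sphere_def)
  finally show "cmod (A_inner A ((A_adj A S \<circ> S) z) z) \<le> (A_opnorm A S)\<^sup>2" .
qed simp

lemma A_crawford_comp_A_adj_le:
  assumes pos: "positive_op A" and "S \<in> BA A"
  shows "A_crawford A (S \<circ> A_adj A S) \<le> (A_opnorm A S)\<^sup>2"
proof (rule A_crawford_le)
  fix z assume "z \<in> A_sphere A"
  have "A_inner A (A_adj A S z) (A_adj A S z) = cnj (A_inner A ((S \<circ> A_adj A S) z) z)"
    using A_inner_A_adj[OF assms] semi_inner_product.conj_sym[OF semi_inner_product_A_inner[OF pos]]
    by (metis comp_apply)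
  then have "cmod (A_inner A ((S \<circ> A_adj A S) z) z) = (A_norm A (A_adj A S z))\<^sup>2"
    by (metis cmod_A_inner_self[OF pos] complex_mod_cnj)
  also have "\<dots> \<le> (A_opnorm A S)\<^sup>2"
    using A_norm_A_adj_le[OF assms, of z] \<open>z \<in> A_sphere A\<close> A_norm_nonneg[OF pos]
    by (intro power_mono) (simp_all add: A_sphere_def)
  finally show "cmod (A_inner A ((S \<circ> A_adj A S) z) z) \<le> (A_opnorm A S)\<^sup>2" .
qed simp

theorem theorem2p11:
  fixes A S :: "'a::chilbert \<Rightarrow> 'a"
  assumes "positive_op A"
    and "S \<in> BA A"
  shows "(A_dw_radius A S)\<^sup>2 \<le> (A_opnorm A S) ^ 4 + 2 * (A_opnorm A S)\<^sup>2
           - sqrt (A_crawford A (A_adj A S \<circ> S) * A_crawford A (S \<circ> A_adj A S))"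
proof -
  let ?M = "A_opnorm A S"
  have "clinear S" using assms(2) by (rule BA_clinear)
  then have "(A_dw_radius A S)\<^sup>2 \<le> ?M\<^sup>2 + ?M ^ 4"
    using power2_A_dw_radius_le assms BA_A_bounded by blast
  moreover have "A_crawford A (A_adj A S \<circ> S) * A_crawford A (S \<circ> A_adj A S) \<le> ?M\<^sup>2 * ?M\<^sup>2"
    using A_crawford_A_adj_comp_le[OF assms] A_crawford_comp_A_adj_le[OF assms] A_crawford_nonneg
    by (intro mult_mono) auto
  then have "sqrt (A_crawford A (A_adj A S \<circ> S) * A_crawford A (S \<circ> A_adj A S)) \<le> ?M\<^sup>2"
    by (metis real_sqrt_le_mono real_sqrt_abs abs_power2 power2_eq_square)
  ultimately show ?thesis by linarith
qed

end
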